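(* Let $B$ be a board with set of sinks $S$ and let $k\ge 1$. If the extended full tilt graph $\hat G_F(B^{(k)})$ of the $k$-scaled board (with sinks the sub-pixels of sinks of $S$) contains an arborescence of weight $w$ converging to its root, then the extended full tilt graph $\hat G_F(B)$ (with sinks $S$) contains an arborescence of weight at most $w$ converging to its root.
   Context: Pixels are unit squares indexed by $\mathbb{Z}^2$. A board $B=(V,E)$ is a finite subgraph of the square grid graph on $\mathbb{Z}^2$. For a pixel $p$, its row (column) segment is the maximal set of pixels reachable from $p$ using only horizontal (vertical) edges; $p^\ell,p^r$ are the leftmost/rightmost pixels of its row segment and $p^u,p^d$ the topmost/bottommost pixels of its column segment. The full tilt graph of a board has its pixels as vertices and edges $(p,p^x)$ for $x\in\{\ell,r,u,d\}$, $p^x\ne p$. The $k$-scaled board $B^{(k)}$ replaces each pixel $(i,j)\in V$ by the $k\times k$ sub-pixels $(ki+a,kj+b)$, $0\le a,b<k$, with adjacent sub-pixels of the same pixel joined by edges and adjacent sub-pixels of different pixels $p,p'$ joined iff $\{p,p'\}\in E$; its sinks are all sub-pixels of sinks of $B$. Extended graph: for a directed graph $G$ with sinks $S$, $\hat G$ has vertex set $V(G)\cup\{r\}$ with new root $r$ and edges: every edge of $G$ with weight $0$; for every edge $(p,q)$ of $G$ with $(q,p)$ not an edge of $G$, the inverse edge $(q,p)$ with weight $1$; and $(s,r)$ with weight $0$ for $s\in S$. An arborescence converging to $r$ is a spanning subgraph in which every vertex other than $r$ has exactly one outgoing edge and a directed path to $r$; its weight is the sum of its edge weights. *)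

theory Defs
  imports Main
begin

type_synonym pixel = "int \<times> int"

text \<open>Pixel (i,j): the first coordinate is the horizontal one, the second the vertical one.\<close>

definition grid_adj :: "pixel \<Rightarrow> pixel \<Rightarrow> bool" where
  "grid_adj p q \<longleftrightarrow> \<bar>fst p - fst q\<bar> + \<bar>snd p - snd q\<bar> = 1"

definition board :: "pixel set \<Rightarrow> pixel set set \<Rightarrow> bool" where
  "board V E \<longleftrightarrow> finite V \<and>
     (\<forall>e\<in>E. \<exists>p q. e = {p, q} \<and> p \<in> V \<and> q \<in> V \<and> grid_adj p q)"

definition hrel :: "pixel set set \<Rightarrow> (pixel \<times> pixel) set" where
  "hrel E = {(p, q). {p, q} \<in> E \<and> p \<noteq> q \<and> snd p = snd q}"

definition vrel :: "pixel set set \<Rightarrow> (pixel \<times> pixel) set" where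
  "vrel E = {(p, q). {p, q} \<in> E \<and> p \<noteq> q \<and> fst p = fst q}"

definition row_seg :: "pixel set set \<Rightarrow> pixel \<Rightarrow> pixel set" where
  "row_seg E p = {q. (p, q) \<in> (hrel E)\<^sup>*}"

definition col_seg :: "pixel set set \<Rightarrow> pixel \<Rightarrow> pixel set" where
  "col_seg E p = {q. (p, q) \<in> (vrel E)\<^sup>*}"

definition left_end :: "pixel set set \<Rightarrow> pixel \<Rightarrow> pixel" where
  "left_end E p = (THE q. q \<in> row_seg E p \<and> (\<forall>q'\<in>row_seg E p. fst q \<le> fst q'))"

definition right_end :: "pixel set set \<Rightarrow> pixel \<Rightarrow> pixel" where
  "right_end E p = (THE q. q \<in> row_seg E p \<and> (\<forall>q'\<in>row_seg E p. fst q' \<le> fst q))"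

definition up_end :: "pixel set set \<Rightarrow> pixel \<Rightarrow> pixel" where
  "up_end E p = (THE q. q \<in> col_seg E p \<and> (\<forall>q'\<in>col_seg E p. snd q \<le> snd q'))"

definition down_end :: "pixel set set \<Rightarrow> pixel \<Rightarrow> pixel" where
  "down_end E p = (THE q. q \<in> col_seg E p \<and> (\<forall>q'\<in>col_seg E p. snd q' \<le> snd q))"

definition full_tilt_edges :: "pixel set \<Rightarrow> pixel set set \<Rightarrow> (pixel \<times> pixel) set" where
  "full_tilt_edges V E = {(p, q). p \<in> V \<and>
      q \<in> {left_end E p, right_end E p, up_end E p, down_end E p} \<and> q \<noteq> p}"

definition parent_px :: "int \<Rightarrow> pixel \<Rightarrow> pixel" where
  "parent_px k q = (fst q div k, snd q div k)"

definition subpixels :: "int \<Rightarrow> pixel set \<Rightarrow> pixel set" where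
  "subpixels k A = {(k * i + a, k * j + b) | i j a b. (i, j) \<in> A \<and> 0 \<le> a \<and> a < k \<and> 0 \<le> b \<and> b < k}"

definition scaled_V :: "int \<Rightarrow> pixel set \<Rightarrow> pixel set" where
  "scaled_V k V = subpixels k V"

definition scaled_E :: "int \<Rightarrow> pixel set \<Rightarrow> pixel set set \<Rightarrow> pixel set set" where
  "scaled_E k V E = {{q, q'} | q q'. q \<in> subpixels k V \<and> q' \<in> subpixels k V \<and> grid_adj q q' \<and>
      (parent_px k q = parent_px k q' \<or> {parent_px k q, parent_px k q'} \<in> E)}"

text \<open>Extended graph: vertices Some p for p in V, root None.\<close>
definition ext_vertices :: "'a set \<Rightarrow> 'a option set" where
  "ext_vertices V = Some ` V \<union> {None}"

definition ext_edges :: "('a \<times> 'a) set \<Rightarrow> 'a set \<Rightarrow> ('a option \<times> 'a option) set" where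
  "ext_edges G S = {(Some p, Some q) | p q. (p, q) \<in> G}
     \<union> {(Some q, Some p) | p q. (p, q) \<in> G \<and> (q, p) \<notin> G}
     \<union> {(Some s, None) | s. s \<in> S}"

definition ext_weight :: "('a \<times> 'a) set \<Rightarrow> ('a option \<times> 'a option) \<Rightarrow> nat" where
  "ext_weight G e = (case e of
       (Some p, Some q) \<Rightarrow> (if (p, q) \<in> G then 0 else 1)
     | _ \<Rightarrow> 0)"

definition arborescence_to ::
  "'v set \<Rightarrow> ('v \<times> 'v) set \<Rightarrow> 'v \<Rightarrow> ('v \<times> 'v) set \<Rightarrow> bool" where
  "arborescence_to Vs Es r A \<longleftrightarrow> A \<subseteq> Es \<and>
     (\<forall>v\<in>Vs - {r}. \<exists>!w. (v, w) \<in> A) \<and>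
     (\<forall>v\<in>Vs. (v, r) \<in> A\<^sup>*)"

definition arb_weight :: "('a \<times> 'a) set \<Rightarrow> ('a option \<times> 'a option) set \<Rightarrow> nat" where
  "arb_weight G A = (\<Sum>e\<in>A. ext_weight G e)"

end

theory Submission
  imports Defs
begin

text \<open>Sending each sub-pixel to its parent pixel maps the row and column segments of the scaled
board onto those of the board, monotonically in each coordinate, hence end pixels to end pixels:
every tilt move of the scaled board either stays inside one pixel or projects to a tilt move of
the board. Given an arborescence of the scaled extended graph, choose in each pixel the sub-pixel
closest to the root. Its outgoing edge leaves the pixel, towards a pixel whose chosen sub-pixel is
closer still, so the projected edges form an arborescence of the board; an edge of weight 0
projects to an edge of weight 0, so the weight does not increase.\<close>

lemma obtain_least_section:
  fixes rank :: "'a \<Rightarrow> nat"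
  assumes "f ` W = V"
  obtains sel where "\<And>p. p \<in> V \<Longrightarrow> sel p \<in> W \<and> f (sel p) = p"
    and "\<And>q. q \<in> W \<Longrightarrow> rank (sel (f q)) \<le> rank q"
proof -
  have "\<exists>q. (q \<in> W \<and> f q = p) \<and> (\<forall>q'. q' \<in> W \<and> f q' = p \<longrightarrow> rank q \<le> rank q')"
    if p: "p \<in> V" for p
  proof -
    obtain q where "q \<in> W" "f q = p" using assms p by blast
    then show ?thesis by (intro ex_has_least_nat) auto
  qed
  then obtain sel where "\<And>p. p \<in> V \<Longrightarrow> (sel p \<in> W \<and> f (sel p) = p) \<and>
      (\<forall>q'. q' \<in> W \<and> f q' = p \<longrightarrow> rank (sel p) \<le> rank q')"
    by metis
  with assms show ?thesis using that by blast
qed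

lemma sum_image_le_sum:
  fixes F :: "'b \<Rightarrow> 'c::ordered_comm_monoid_add"
  assumes "finite A" and "inj_on h V" and "inj_on g V" and "g ` V \<subseteq> A"
    and "\<And>p. p \<in> V \<Longrightarrow> F (h p) \<le> F' (g p)" and "\<And>e. e \<in> A \<Longrightarrow> 0 \<le> F' e"
  shows "sum F (h ` V) \<le> sum F' A"
proof -
  have "sum F (h ` V) = (\<Sum>p\<in>V. F (h p))" using assms(2) by (rule sum.reindex_cong) simp_all
  also have "\<dots> \<le> (\<Sum>p\<in>V. F' (g p))" using assms(5) by (rule sum_mono)
  also have "\<dots> = sum F' (g ` V)" using assms(3) by (simp add: sum.reindex)
  also have "\<dots> \<le> sum F' A" using assms(1,4,6) by (intro sum_mono2) auto
  finally show ?thesis .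
qed

lemma rtrancl_project:
  assumes "\<And>x y. (x, y) \<in> R \<Longrightarrow> f x = f y \<or> (f x, f y) \<in> R'" and "(x, y) \<in> R\<^sup>*"
  shows "(f x, f y) \<in> R'\<^sup>*"
  using assms(2)
proof induction
  case (step y z)
  then show ?case using assms(1)[of y z] by (auto intro: rtrancl.rtrancl_into_rtrancl)
qed simp

lemma rtrancl_lift:
  assumes "\<And>x r'. (f x, r') \<in> R' \<Longrightarrow> \<exists>y. (x, y) \<in> R\<^sup>* \<and> f y = r'" and "(f x, r) \<in> R'\<^sup>*"
  shows "\<exists>y. (x, y) \<in> R\<^sup>* \<and> f y = r"
  using assms(2)
proof (induction rule: rtrancl_induct)
  case (step r r')
  then obtain y where "(x, y) \<in> R\<^sup>*" "f y = r" by blast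
  with assms(1) step(2) show ?case by (metis rtrancl_trans)
qed blast

lemma rtrancl_int_path:
  fixes g :: "int \<Rightarrow> 'a"
  assumes "sym R" and "\<And>u. min a b \<le> u \<Longrightarrow> u < max a b \<Longrightarrow> (g u, g (u + 1)) \<in> R"
  shows "(g a, g b) \<in> R\<^sup>*"
proof -
  have "(g (min a b), g u) \<in> R\<^sup>*" if "min a b \<le> u" "u \<le> max a b" for u
    using that
  proof (induction u rule: int_ge_induct)
    case (step u)
    then show ?case using assms(2)[of u] by (simp add: rtrancl.rtrancl_into_rtrancl)
  qed simp
  then have "(g (min a b), g (max a b)) \<in> R\<^sup>*" by simp
  then show ?thesis using sym_rtrancl[OF assms(1)] unfolding sym_def min_def max_def
    by (auto split: if_splits)
qed

lemma div_between:
  fixes k :: int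
  assumes "0 < k" and "min a b \<le> u" and "u \<le> max a b" and "\<bar>a div k - b div k\<bar> \<le> 1"
  shows "u div k = a div k \<or> u div k = b div k"
proof (cases "a \<le> b")
  case True
  then show ?thesis using assms zdiv_mono1[of a u k] zdiv_mono1[of u b k] by auto
next
  case False
  then show ?thesis using assms zdiv_mono1[of b u k] zdiv_mono1[of u a k] by auto
qed

lemma The_least_eq:
  fixes h :: "'a \<Rightarrow> 'c::linorder"
  assumes "inj_on h R" and "m \<in> R" and "\<forall>y\<in>R. h m \<le> h y"
  shows "(THE x. x \<in> R \<and> (\<forall>y\<in>R. h x \<le> h y)) = m"
proof (rule the_equality)
  show "m \<in> R \<and> (\<forall>y\<in>R. h m \<le> h y)" using assms(2,3) by simp
  fix x assume x: "x \<in> R \<and> (\<forall>y\<in>R. h x \<le> h y)"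
  then have "h x = h m" using assms(2,3) by (simp add: order.antisym)
  then show "x = m" using assms(1,2) x inj_onD by metis
qed

lemma The_least_image:
  fixes h :: "'a \<Rightarrow> 'c::linorder" and h' :: "'b \<Rightarrow> 'd::linorder"
  assumes "finite R" and "R \<noteq> {}" and "f ` R = R'" and "inj_on h R" and "inj_on h' R'"
    and mono: "\<And>x y. x \<in> R \<Longrightarrow> y \<in> R \<Longrightarrow> h x \<le> h y \<Longrightarrow> h' (f x) \<le> h' (f y)"
  shows "(THE x. x \<in> R \<and> (\<forall>y\<in>R. h x \<le> h y)) \<in> R \<and>
    f (THE x. x \<in> R \<and> (\<forall>y\<in>R. h x \<le> h y)) = (THE z. z \<in> R' \<and> (\<forall>z'\<in>R'. h' z \<le> h' z'))"
proof -
  define m where "m = arg_min_on h R"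
  have m: "m \<in> R" "\<forall>y\<in>R. h m \<le> h y"
    using arg_min_if_finite[OF assms(1,2), of h] unfolding m_def by (auto simp: not_less)
  then have "\<forall>z\<in>R'. h' (f m) \<le> h' z" using mono assms(3) by blast
  then have "(THE z. z \<in> R' \<and> (\<forall>z'\<in>R'. h' z \<le> h' z')) = f m"
    using The_least_eq[OF assms(5)] m(1) assms(3) by blast
  then show ?thesis using The_least_eq[OF assms(4) m] m(1) by simp
qed

section \<open>Arborescences of extended graphs\<close>

definition arb_depth :: "('v \<times> 'v) set \<Rightarrow> 'v \<Rightarrow> 'v \<Rightarrow> nat" where
  "arb_depth A r v = (LEAST n. (v, r) \<in> A ^^ n)"

lemma arborescence_depth_less:
  assumes arb: "arborescence_to Vs Es r A" and v: "v \<in> Vs - {r}" and vy: "(v, y) \<in> A"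
  shows "arb_depth A r y < arb_depth A r v"
proof -
  have "(v, r) \<in> A\<^sup>*" using arb v unfolding arborescence_to_def by blast
  then obtain n where "(v, r) \<in> A ^^ n" using rtrancl_power by blast
  then have v_depth: "(v, r) \<in> A ^^ arb_depth A r v"
    unfolding arb_depth_def by (rule LeastI)
  then obtain m where m: "arb_depth A r v = Suc m"
    using v by (cases "arb_depth A r v") auto
  then obtain y' where "(v, y') \<in> A" and y'_r: "(y', r) \<in> A ^^ m"
    using v_depth relpow_Suc_D2 by metis
  then have "y' = y" using arb v vy unfolding arborescence_to_def by blast
  with y'_r have "(y, r) \<in> A ^^ m" by simp
  then show ?thesis
    using m Least_le[of "\<lambda>n. (y, r) \<in> A ^^ n" m] unfolding arb_depth_def by simp
qed

lemma arborescence_toI_rank: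
  fixes rank :: "'v \<Rightarrow> nat"
  assumes "A \<subseteq> Es" and "\<forall>v\<in>Vs - {r}. \<exists>!w. (v, w) \<in> A"
    and descent: "\<And>v. v \<in> Vs - {r} \<Longrightarrow>
      \<exists>w. (v, w) \<in> A \<and> (w = r \<or> w \<in> Vs - {r} \<and> rank w < rank v)"
  shows "arborescence_to Vs Es r A"
proof -
  have "(v, r) \<in> A\<^sup>*" if "v \<in> Vs - {r}" for v
    using that
  proof (induction "rank v" arbitrary: v rule: less_induct)
    case less
    then obtain w where "(v, w) \<in> A" and "w = r \<or> w \<in> Vs - {r} \<and> rank w < rank v"
      using descent by blast
    with less.hyps show ?case by (meson converse_rtrancl_into_rtrancl rtrancl.rtrancl_refl)
  qed
  then show ?thesis using assms(1,2) unfolding arborescence_to_def by blast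
qed

lemma ext_edges_map:
  assumes e: "(Some q, y) \<in> ext_edges H T"
    and ne: "map_option f y \<noteq> Some (f q)"
    and H_G: "\<And>q q'. (q, q') \<in> H \<Longrightarrow> f q \<noteq> f q' \<Longrightarrow> (f q, f q') \<in> G"
    and T_S: "f ` T \<subseteq> S"
  shows "(Some (f q), map_option f y) \<in> ext_edges G S"
proof (cases y)
  case None
  then show ?thesis using e T_S unfolding ext_edges_def by auto
next
  case (Some q')
  then have "(f q, f q') \<in> G \<or> (f q', f q) \<in> G"
    using e ne H_G unfolding ext_edges_def by auto
  then show ?thesis using Some unfolding ext_edges_def by auto
qed

lemma ext_weight_map_le:
  assumes ne: "map_option f y \<noteq> Some (f q)"
    and H_G: "\<And>q q'. (q, q') \<in> H \<Longrightarrow> f q \<noteq> f q' \<Longrightarrow> (f q, f q') \<in> G"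
  shows "ext_weight G (Some (f q), map_option f y) \<le> ext_weight H (Some q, y)"
  using assms unfolding ext_weight_def by (cases y) auto

lemma finite_ext_edges:
  assumes "finite W" and "H \<subseteq> W \<times> W" and "T \<subseteq> W"
  shows "finite (ext_edges H T)"
proof -
  have "ext_edges H T \<subseteq> ext_vertices W \<times> ext_vertices W"
    using assms(2,3) unfolding ext_edges_def ext_vertices_def by auto
  then show ?thesis using assms(1) unfolding ext_vertices_def by (simp add: finite_subset)
qed

lemma arborescence_fiber_descent:
  fixes f :: "'a \<Rightarrow> 'b"
  assumes arb: "arborescence_to (ext_vertices W) (ext_edges H T) None A"
    and H_W: "H \<subseteq> W \<times> W" and f_W: "f ` W = V"
  obtains sel nx and rank :: "'b \<Rightarrow> nat"
  where "\<And>p. p \<in> V \<Longrightarrow> sel p \<in> W \<and> f (sel p) = p \<and> (Some (sel p), nx p) \<in> A"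
    and "\<And>p q. p \<in> V \<Longrightarrow> nx p = Some q \<Longrightarrow> q \<in> W \<and> f q \<noteq> p \<and> rank (f q) < rank p"
proof -
  define d where "d q = arb_depth A None (Some q)" for q
  obtain sel where sel: "\<And>p. p \<in> V \<Longrightarrow> sel p \<in> W \<and> f (sel p) = p"
    and sel_least: "\<And>q. q \<in> W \<Longrightarrow> d (sel (f q)) \<le> d q"
    using obtain_least_section[OF f_W] by blast
  have A_ext: "A \<subseteq> ext_edges H T" and A_out: "\<forall>v\<in>ext_vertices W - {None}. \<exists>!w. (v, w) \<in> A"
    using arb unfolding arborescence_to_def by auto
  have sel_vertex: "Some (sel p) \<in> ext_vertices W - {None}" if "p \<in> V" for p
    using sel[OF that] unfolding ext_vertices_def by auto
  have "\<exists>y. (Some (sel p), y) \<in> A" if "p \<in> V" for p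
    using A_out sel_vertex[OF that] by blast
  then obtain nx where nx: "\<And>p. p \<in> V \<Longrightarrow> (Some (sel p), nx p) \<in> A"
    by metis
  have "q \<in> W \<and> f q \<noteq> p \<and> d (sel (f q)) < d (sel p)" if p: "p \<in> V" and q: "nx p = Some q" for p q
  proof -
    have "(sel p, q) \<in> H \<or> (q, sel p) \<in> H"
      using nx[OF p] A_ext q unfolding ext_edges_def by auto
    then have "q \<in> W" using H_W by auto
    moreover have "d q < d (sel p)"
      using arborescence_depth_less[OF arb sel_vertex[OF p] nx[OF p]] q unfolding d_def by simp
    ultimately show ?thesis using sel_least[of q] sel[OF p] by fastforce
  qed
  then show ?thesis using that[of sel nx "\<lambda>p. d (sel p)"] sel nx by blast
qed

lemma arborescence_quotient:
  fixes f :: "'a \<Rightarrow> 'b"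
  assumes arb: "arborescence_to (ext_vertices W) (ext_edges H T) None A"
    and "finite W" and H_W: "H \<subseteq> W \<times> W" and "T \<subseteq> W" and f_W: "f ` W = V"
    and H_G: "\<And>q q'. (q, q') \<in> H \<Longrightarrow> f q \<noteq> f q' \<Longrightarrow> (f q, f q') \<in> G"
    and T_S: "f ` T \<subseteq> S"
  shows "\<exists>A'. arborescence_to (ext_vertices V) (ext_edges G S) None A'
           \<and> arb_weight G A' \<le> arb_weight H A"
proof -
  obtain sel nx and rank :: "'b \<Rightarrow> nat"
    where sel: "\<And>p. p \<in> V \<Longrightarrow> sel p \<in> W \<and> f (sel p) = p \<and> (Some (sel p), nx p) \<in> A"
      and descent: "\<And>p q. p \<in> V \<Longrightarrow> nx p = Some q \<Longrightarrow> q \<in> W \<and> f q \<noteq> p \<and> rank (f q) < rank p"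
    using arborescence_fiber_descent[OF arb H_W f_W] by blast
  have A_ext: "A \<subseteq> ext_edges H T" using arb unfolding arborescence_to_def by blast
  have nx_ne: "map_option f (nx p) \<noteq> Some p" if "p \<in> V" for p
    using descent[OF that] by (cases "nx p") auto
  define h where "h p = (Some p, map_option f (nx p))" for p
  define A' where "A' = h ` V"
  have "A' \<subseteq> ext_edges G S"
    using ext_edges_map[OF _ _ H_G T_S] sel A_ext nx_ne unfolding A'_def h_def by fastforce
  moreover have "\<forall>v\<in>ext_vertices V - {None}. \<exists>!w. (v, w) \<in> A'"
    unfolding ext_vertices_def A'_def h_def by auto
  moreover have "\<exists>w. (v, w) \<in> A' \<and> (w = None \<or> w \<in> ext_vertices V - {None} \<and>
      rank (the w) < rank (the v))" if v_in: "v \<in> ext_vertices V - {None}" for v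
  proof -
    obtain p where p: "p \<in> V" and v: "v = Some p" using v_in unfolding ext_vertices_def by auto
    have "(v, map_option f (nx p)) \<in> A'" unfolding A'_def h_def v using p by blast
    moreover have "Some (f q) \<in> ext_vertices V - {None} \<and> rank (f q) < rank p"
      if "nx p = Some q" for q
      using descent[OF p that] f_W unfolding ext_vertices_def by auto
    ultimately show ?thesis unfolding v by (cases "nx p") auto
  qed
  ultimately have "arborescence_to (ext_vertices V) (ext_edges G S) None A'"
    by (rule arborescence_toI_rank)
  moreover have "arb_weight G A' \<le> arb_weight H A"
    unfolding arb_weight_def A'_def
  proof (rule sum_image_le_sum)
    show "finite A" using finite_ext_edges[OF assms(2-4)] A_ext by (rule finite_subset[rotated])
    show "inj_on (\<lambda>p. (Some (sel p), nx p)) V"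
      using sel by (intro inj_onI) (metis option.inject prod.inject)
    show "ext_weight G (h p) \<le> ext_weight H (Some (sel p), nx p)" if "p \<in> V" for p
      using ext_weight_map_le[where f = f and y = "nx p" and q = "sel p" and H = H and G = G]
        H_G nx_ne[OF that] sel[OF that]
      unfolding h_def by simp
  qed (use sel in \<open>auto simp: inj_on_def h_def\<close>)
  ultimately show ?thesis by blast
qed

section \<open>The scaled board\<close>

lemma mem_subpixels_iff:
  assumes "0 < k"
  shows "x \<in> subpixels k A \<longleftrightarrow> parent_px k x \<in> A"
proof
  assume "x \<in> subpixels k A"
  then obtain i j a b where "x = (k * i + a, k * j + b)" "(i, j) \<in> A"
    and "0 \<le> a" "a < k" "0 \<le> b" "b < k"
    unfolding subpixels_def by blast
  then show "parent_px k x \<in> A" by (simp add: parent_px_def)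
next
  assume "parent_px k x \<in> A"
  moreover have "x = (k * (fst x div k) + fst x mod k, k * (snd x div k) + snd x mod k)" by simp
  ultimately show "x \<in> subpixels k A"
    using assms unfolding subpixels_def parent_px_def by fastforce
qed

lemma parent_px_subpixels:
  assumes "0 < k"
  shows "parent_px k ` subpixels k A = A"
proof -
  have "p \<in> parent_px k ` subpixels k A" if "p \<in> A" for p
  proof -
    have "parent_px k (k * fst p, k * snd p) = p" using assms by (simp add: parent_px_def)
    with that show ?thesis using mem_subpixels_iff[OF assms] by (metis image_eqI)
  qed
  then show ?thesis using mem_subpixels_iff[OF assms] by blast
qed

lemma finite_subpixels:
  assumes "finite A"
  shows "finite (subpixels k A)"
proof -
  have "subpixels k A = (\<lambda>((i, j), (a, b)). (k * i + a, k * j + b)) ` (A \<times> {0..<k} \<times> {0..<k})"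
    unfolding subpixels_def by (auto simp: image_iff) force+
  then show ?thesis using assms by simp
qed

lemma subpixels_mono: "A \<subseteq> B \<Longrightarrow> subpixels k A \<subseteq> subpixels k B"
  unfolding subpixels_def by blast

lemma grid_adj_sym: "grid_adj p q \<longleftrightarrow> grid_adj q p"
  unfolding grid_adj_def by (simp add: abs_minus_commute)

lemma board_edgeD:
  assumes "board V E" and "{r, r'} \<in> E"
  shows "r \<in> V \<and> r' \<in> V \<and> grid_adj r r'"
proof -
  obtain p q where "{r, r'} = {p, q}" "p \<in> V" "q \<in> V" "grid_adj p q"
    using assms unfolding board_def by blast
  then show ?thesis using grid_adj_sym unfolding doubleton_eq_iff by blast
qed

lemma scaled_E_parents:
  assumes "{x, y} \<in> scaled_E k V E"
  shows "parent_px k x = parent_px k y \<or> {parent_px k x, parent_px k y} \<in> E"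
proof -
  obtain q q' where "{x, y} = {q, q'}"
    and "parent_px k q = parent_px k q' \<or> {parent_px k q, parent_px k q'} \<in> E"
    using assms unfolding scaled_E_def by blast
  then show ?thesis unfolding doubleton_eq_iff by (auto simp: insert_commute)
qed

lemma Union_scaled_E: "\<Union> (scaled_E k V E) \<subseteq> subpixels k V"
  unfolding scaled_E_def by auto

lemma scaled_E_memI:
  assumes "0 < k" and "board V E" and "{r, r'} \<in> E" and "grid_adj x y"
    and "parent_px k x \<in> {r, r'}" and "parent_px k y \<in> {r, r'}"
  shows "{x, y} \<in> scaled_E k V E"
proof -
  have "r \<in> V" "r' \<in> V" using board_edgeD assms(2,3) by blast+
  then have "x \<in> subpixels k V" "y \<in> subpixels k V"
    using assms(5,6) mem_subpixels_iff[OF assms(1)] by auto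
  moreover have "parent_px k x = parent_px k y \<or> {parent_px k x, parent_px k y} \<in> E"
    using assms(3,5,6) by (auto simp: insert_commute)
  ultimately show ?thesis using assms(4) unfolding scaled_E_def by blast
qed

section \<open>Segments and tilt moves of the scaled board\<close>

lemma hrel_sym: "sym (hrel E)"
  unfolding sym_def hrel_def by (auto simp: insert_commute)

lemma vrel_sym: "sym (vrel E)"
  unfolding sym_def vrel_def by (auto simp: insert_commute)

lemma row_seg_subset: "row_seg E p \<subseteq> insert p (\<Union> E)"
proof
  fix q assume "q \<in> row_seg E p"
  then show "q \<in> insert p (\<Union> E)"
    unfolding row_seg_def mem_Collect_eq
    by (induction rule: rtrancl_induct) (auto simp: hrel_def)
qed

lemma col_seg_subset: "col_seg E p \<subseteq> insert p (\<Union> E)"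
proof
  fix q assume "q \<in> col_seg E p"
  then show "q \<in> insert p (\<Union> E)"
    unfolding col_seg_def mem_Collect_eq
    by (induction rule: rtrancl_induct) (auto simp: vrel_def)
qed

lemma row_seg_snd: "q \<in> row_seg E p \<Longrightarrow> snd q = snd p"
  unfolding row_seg_def mem_Collect_eq by (induction rule: rtrancl_induct) (auto simp: hrel_def)

lemma col_seg_fst: "q \<in> col_seg E p \<Longrightarrow> fst q = fst p"
  unfolding col_seg_def mem_Collect_eq by (induction rule: rtrancl_induct) (auto simp: vrel_def)

lemma hrel_scaled_project:
  assumes "(x, y) \<in> hrel (scaled_E k V E)"
  shows "parent_px k x = parent_px k y \<or> (parent_px k x, parent_px k y) \<in> hrel E"
  using assms scaled_E_parents[of x y k V E] unfolding hrel_def by (auto simp: parent_px_def)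

lemma vrel_scaled_project:
  assumes "(x, y) \<in> vrel (scaled_E k V E)"
  shows "parent_px k x = parent_px k y \<or> (parent_px k x, parent_px k y) \<in> vrel E"
  using assms scaled_E_parents[of x y k V E] unfolding vrel_def by (auto simp: parent_px_def)

lemma hrel_scaled_lift:
  assumes k: "0 < k" and B: "board V E" and r: "(parent_px k x, r') \<in> hrel E"
  shows "\<exists>y. (x, y) \<in> (hrel (scaled_E k V E))\<^sup>* \<and> parent_px k y = r'"
proof -
  define r where "r = parent_px k x"
  have E: "{r, r'} \<in> E" and row: "snd r' = snd r" using r unfolding hrel_def r_def by auto
  then have "\<bar>fst r - fst r'\<bar> \<le> 1" using board_edgeD[OF B E] unfolding grid_adj_def by simp
  \<comment> \<open>Walk along the row of x to the first column of r'; every sub-pixel passed lies in r or r'.\<close>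
  define g :: "int \<Rightarrow> pixel" where "g u = (u, snd x)" for u
  define b where "b = k * fst r'"
  have b_div: "b div k = fst r'" using k unfolding b_def by simp
  have "(g u, g (u + 1)) \<in> hrel (scaled_E k V E)" if "min (fst x) b \<le> u" "u < max (fst x) b" for u
  proof -
    have "v div k = fst r \<or> v div k = fst r'" if "min (fst x) b \<le> v" "v \<le> max (fst x) b" for v
      using div_between[OF k that] b_div \<open>\<bar>fst r - fst r'\<bar> \<le> 1\<close> unfolding r_def parent_px_def
      by simp
    then have "parent_px k (g v) \<in> {r, r'}" if "min (fst x) b \<le> v" "v \<le> max (fst x) b" for v
      using that row unfolding g_def r_def parent_px_def by (auto simp: prod_eq_iff)
    then have "{g u, g (u + 1)} \<in> scaled_E k V E"
      using that by (intro scaled_E_memI[OF k B E]) (auto simp: g_def grid_adj_def)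
    then show ?thesis unfolding hrel_def g_def by auto
  qed
  then have "(g (fst x), g b) \<in> (hrel (scaled_E k V E))\<^sup>*" by (rule rtrancl_int_path[OF hrel_sym])
  moreover have "parent_px k (g b) = r'"
    using b_div row unfolding g_def r_def parent_px_def by (simp add: prod_eq_iff)
  ultimately show ?thesis unfolding g_def by auto
qed

lemma vrel_scaled_lift:
  assumes k: "0 < k" and B: "board V E" and r: "(parent_px k x, r') \<in> vrel E"
  shows "\<exists>y. (x, y) \<in> (vrel (scaled_E k V E))\<^sup>* \<and> parent_px k y = r'"
proof -
  define r where "r = parent_px k x"
  have E: "{r, r'} \<in> E" and column: "fst r' = fst r" using r unfolding vrel_def r_def by auto
  then have "\<bar>snd r - snd r'\<bar> \<le> 1" using board_edgeD[OF B E] unfolding grid_adj_def by simp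
  define g :: "int \<Rightarrow> pixel" where "g u = (fst x, u)" for u
  define b where "b = k * snd r'"
  have b_div: "b div k = snd r'" using k unfolding b_def by simp
  have "(g u, g (u + 1)) \<in> vrel (scaled_E k V E)" if "min (snd x) b \<le> u" "u < max (snd x) b" for u
  proof -
    have "v div k = snd r \<or> v div k = snd r'" if "min (snd x) b \<le> v" "v \<le> max (snd x) b" for v
      using div_between[OF k that] b_div \<open>\<bar>snd r - snd r'\<bar> \<le> 1\<close> unfolding r_def parent_px_def
      by simp
    then have "parent_px k (g v) \<in> {r, r'}" if "min (snd x) b \<le> v" "v \<le> max (snd x) b" for v
      using that column unfolding g_def r_def parent_px_def by (auto simp: prod_eq_iff)
    then have "{g u, g (u + 1)} \<in> scaled_E k V E"
      using that by (intro scaled_E_memI[OF k B E]) (auto simp: g_def grid_adj_def)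
    then show ?thesis unfolding vrel_def g_def by auto
  qed
  then have "(g (snd x), g b) \<in> (vrel (scaled_E k V E))\<^sup>*" by (rule rtrancl_int_path[OF vrel_sym])
  moreover have "parent_px k (g b) = r'"
    using b_div column unfolding g_def r_def parent_px_def by (simp add: prod_eq_iff)
  ultimately show ?thesis unfolding g_def by auto
qed

lemma row_seg_scaled:
  assumes "0 < k" and "board V E"
  shows "parent_px k ` row_seg (scaled_E k V E) q = row_seg E (parent_px k q)"
proof (intro equalityI subsetI)
  fix r assume "r \<in> parent_px k ` row_seg (scaled_E k V E) q"
  then obtain x where "(q, x) \<in> (hrel (scaled_E k V E))\<^sup>*" and "r = parent_px k x"
    unfolding row_seg_def by blast
  then show "r \<in> row_seg E (parent_px k q)"
    unfolding row_seg_def using rtrancl_project[OF hrel_scaled_project] by simp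
next
  fix r assume "r \<in> row_seg E (parent_px k q)"
  then show "r \<in> parent_px k ` row_seg (scaled_E k V E) q"
    using rtrancl_lift[where R = "hrel (scaled_E k V E)", OF hrel_scaled_lift[OF assms]]
    unfolding row_seg_def by (metis image_eqI mem_Collect_eq)
qed

lemma col_seg_scaled:
  assumes "0 < k" and "board V E"
  shows "parent_px k ` col_seg (scaled_E k V E) q = col_seg E (parent_px k q)"
proof (intro equalityI subsetI)
  fix r assume "r \<in> parent_px k ` col_seg (scaled_E k V E) q"
  then obtain x where "(q, x) \<in> (vrel (scaled_E k V E))\<^sup>*" and "r = parent_px k x"
    unfolding col_seg_def by blast
  then show "r \<in> col_seg E (parent_px k q)"
    unfolding col_seg_def using rtrancl_project[OF vrel_scaled_project] by simp
next
  fix r assume "r \<in> col_seg E (parent_px k q)"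
  then show "r \<in> parent_px k ` col_seg (scaled_E k V E) q"
    using rtrancl_lift[where R = "vrel (scaled_E k V E)", OF vrel_scaled_lift[OF assms]]
    unfolding col_seg_def by (metis image_eqI mem_Collect_eq)
qed

lemma row_ends_scaled:
  assumes k: "0 < k" and B: "board V E"
  shows "left_end (scaled_E k V E) q \<in> row_seg (scaled_E k V E) q \<and>
      parent_px k (left_end (scaled_E k V E) q) = left_end E (parent_px k q)" (is ?left)
    and "right_end (scaled_E k V E) q \<in> row_seg (scaled_E k V E) q \<and>
      parent_px k (right_end (scaled_E k V E) q) = right_end E (parent_px k q)" (is ?right)
proof -
  let ?R = "row_seg (scaled_E k V E) q"
  have fin: "finite ?R"
    using row_seg_subset Union_scaled_E finite_subpixels B unfolding board_def
    by (metis finite_insert finite_subset insert_mono)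
  have ne: "?R \<noteq> {}" unfolding row_seg_def by blast
  have inj: "inj_on fst (row_seg F p)" "inj_on (\<lambda>x. - fst x) (row_seg F p)" for F p
    using row_seg_snd[of _ F p] by (auto simp: inj_on_def prod_eq_iff)
  have mono: "fst x \<le> fst y \<Longrightarrow> fst (parent_px k x) \<le> fst (parent_px k y)"
    "- fst x \<le> - fst y \<Longrightarrow> - fst (parent_px k x) \<le> - fst (parent_px k y)" for x y
    using k by (auto simp: parent_px_def zdiv_mono1)
  have "right_end F p = (THE x. x \<in> row_seg F p \<and> (\<forall>y\<in>row_seg F p. - fst x \<le> - fst y))"
    for F p unfolding right_end_def by simp
  then show ?left ?right
    unfolding left_end_def
    using The_least_image[OF fin ne row_seg_scaled[OF k B] inj(1) inj(1) mono(1)]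
      The_least_image[OF fin ne row_seg_scaled[OF k B] inj(2) inj(2) mono(2)] by simp_all
qed

lemma col_ends_scaled:
  assumes k: "0 < k" and B: "board V E"
  shows "up_end (scaled_E k V E) q \<in> col_seg (scaled_E k V E) q \<and>
      parent_px k (up_end (scaled_E k V E) q) = up_end E (parent_px k q)" (is ?left)
    and "down_end (scaled_E k V E) q \<in> col_seg (scaled_E k V E) q \<and>
      parent_px k (down_end (scaled_E k V E) q) = down_end E (parent_px k q)" (is ?right)
proof -
  let ?R = "col_seg (scaled_E k V E) q"
  have fin: "finite ?R"
    using col_seg_subset Union_scaled_E finite_subpixels B unfolding board_def
    by (metis finite_insert finite_subset insert_mono)
  have ne: "?R \<noteq> {}" unfolding col_seg_def by blast
  have inj: "inj_on snd (col_seg F p)" "inj_on (\<lambda>x. - snd x) (col_seg F p)" for F p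
    using col_seg_fst[of _ F p] by (auto simp: inj_on_def prod_eq_iff)
  have mono: "snd x \<le> snd y \<Longrightarrow> snd (parent_px k x) \<le> snd (parent_px k y)"
    "- snd x \<le> - snd y \<Longrightarrow> - snd (parent_px k x) \<le> - snd (parent_px k y)" for x y
    using k by (auto simp: parent_px_def zdiv_mono1)
  have "down_end F p = (THE x. x \<in> col_seg F p \<and> (\<forall>y\<in>col_seg F p. - snd x \<le> - snd y))"
    for F p unfolding down_end_def by simp
  then show ?left ?right
    unfolding up_end_def
    using The_least_image[OF fin ne col_seg_scaled[OF k B] inj(1) inj(1) mono(1)]
      The_least_image[OF fin ne col_seg_scaled[OF k B] inj(2) inj(2) mono(2)] by simp_all
qed

lemma full_tilt_edges_scaled:
  assumes k: "0 < k" and B: "board V E"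
    and e: "(q, q') \<in> full_tilt_edges (scaled_V k V) (scaled_E k V E)"
  shows "q \<in> subpixels k V \<and> q' \<in> subpixels k V \<and>
    (parent_px k q \<noteq> parent_px k q' \<longrightarrow> (parent_px k q, parent_px k q') \<in> full_tilt_edges V E)"
proof -
  let ?E = "scaled_E k V E"
  have q: "q \<in> subpixels k V"
    and q': "q' \<in> {left_end ?E q, right_end ?E q, up_end ?E q, down_end ?E q}" "q' \<noteq> q"
    using e unfolding full_tilt_edges_def scaled_V_def by auto
  note ends = row_ends_scaled[OF k B, of q] col_ends_scaled[OF k B, of q]
  have "q' \<in> row_seg ?E q \<union> col_seg ?E q" using q' ends by auto
  then have "q' \<in> subpixels k V"
    using q row_seg_subset col_seg_subset Union_scaled_E by blast
  moreover have "parent_px k q' \<in> {left_end E (parent_px k q), right_end E (parent_px k q),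
      up_end E (parent_px k q), down_end E (parent_px k q)}"
    using q' ends by auto
  ultimately show ?thesis using q mem_subpixels_iff[OF k] unfolding full_tilt_edges_def by auto
qed

theorem mainTheorem9:
  fixes V :: "pixel set" and E :: "pixel set set" and S :: "pixel set"
    and k :: int and w :: nat and A :: "(pixel option \<times> pixel option) set"
  assumes "board V E" and "S \<subseteq> V" and "k \<ge> 1"
    and "arborescence_to (ext_vertices (scaled_V k V))
           (ext_edges (full_tilt_edges (scaled_V k V) (scaled_E k V E)) (subpixels k S)) None A"
    and "arb_weight (full_tilt_edges (scaled_V k V) (scaled_E k V E)) A = w"
  shows "\<exists>A'. arborescence_to (ext_vertices V) (ext_edges (full_tilt_edges V E) S) None A'
           \<and> arb_weight (full_tilt_edges V E) A' \<le> w"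
proof -
  have k: "0 < k" using \<open>k \<ge> 1\<close> by simp
  note tilt_edge = full_tilt_edges_scaled[OF k \<open>board V E\<close>]
  have "finite (scaled_V k V)"
    using \<open>board V E\<close> finite_subpixels unfolding board_def scaled_V_def by blast
  moreover have "full_tilt_edges (scaled_V k V) (scaled_E k V E) \<subseteq> scaled_V k V \<times> scaled_V k V"
    using tilt_edge unfolding scaled_V_def by auto
  moreover have "subpixels k S \<subseteq> scaled_V k V"
    using subpixels_mono[OF \<open>S \<subseteq> V\<close>] unfolding scaled_V_def .
  moreover have "parent_px k ` scaled_V k V = V"
    using parent_px_subpixels[OF k] unfolding scaled_V_def .
  moreover have "parent_px k ` subpixels k S \<subseteq> S"
    using parent_px_subpixels[OF k] by simp
  ultimately show ?thesis
    using arborescence_quotient[OF assms(4), where G = "full_tilt_edges V E"] tilt_edge assms(5)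
    by simp
qed

end
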